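(* Let $\ell=p_1^{\alpha_1}\cdots p_\omega^{\alpha_\omega}$ be the prime factorization of a positive integer $\ell$ (distinct primes $p_i$, $\alpha_i\ge1$), and let $\mathcal{A}$ be an $\ell$-Oddtown on $[n]$. For $i\in[\omega]$ let $\mathcal{A}'_i=\{A\in\mathcal{A}: |A|\equiv 0\pmod{p_i^{\alpha_i}}\}$, and let $M_i$ be the $|\mathcal{A}'_i|\times n$ $0$--$1$ matrix whose rows are the characteristic vectors of the sets in $\mathcal{A}'_i$. Call an odd prime $p_i$ dividing $\ell$ good if $M_i$ has at least $n^{0.4}$ distinct columns, and bad otherwise. Then either at most one odd prime divisor of $\ell$ is bad, or \[ |\mathcal{A}|\leq \omega n-n^{0.2}+\omega\ell . \]
   Context: An $\ell$-Oddtown on $[n]=\{1,\dots,n\}$ is a family $\mathcal{A}$ of subsets of $[n]$ such that $|A|\not\equiv 0 \pmod{\ell}$ for every $A\in\mathcal{A}$ and $|A\cap B|\equiv 0\pmod{\ell}$ for all distinct $A,B\in\mathcal{A}$. *)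

theory Defs
  imports Complex_Main "HOL-Computational_Algebra.Primes"
begin

definition oddtown :: "nat \<Rightarrow> nat \<Rightarrow> nat set set \<Rightarrow> bool" where
  "oddtown l n F \<longleftrightarrow>
     (\<forall>A\<in>F. A \<subseteq> {1..n}) \<and>
     (\<forall>A\<in>F. \<not> l dvd card A) \<and>
     (\<forall>A\<in>F. \<forall>B\<in>F. A \<noteq> B \<longrightarrow> l dvd card (A \<inter> B))"

definition subfam :: "nat \<Rightarrow> nat \<Rightarrow> nat set set \<Rightarrow> nat set set" where
  "subfam l p F = {A \<in> F. p ^ multiplicity p l dvd card A}"

text \<open>Number of distinct columns of the 0-1 incidence matrix whose rows are the
  characteristic vectors (over [n]) of the sets in G; column j is identified with
  the indicator of the rows containing j, i.e. the set of rows containing j.\<close>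
definition num_distinct_cols :: "nat \<Rightarrow> nat set set \<Rightarrow> nat" where
  "num_distinct_cols n G = card ((\<lambda>j. {A \<in> G. j \<in> A}) ` {1..n})"

definition bad_prime :: "nat \<Rightarrow> nat \<Rightarrow> nat set set \<Rightarrow> nat \<Rightarrow> bool" where
  "bad_prime l n F p \<longleftrightarrow> prime p \<and> odd p \<and> p dvd l \<and>
     real (num_distinct_cols n (subfam l p F)) < real n powr 0.4"

end

theory Submission
  imports Defs "Jordan_Normal_Form.Determinant"
begin

(* Fix a bad odd prime p and let t be the number of distinct columns of M_p, so t < n^0.4.
   Sets outside A'_p have sizes not divisible by p^alpha but pairwise intersections divisible
   by p^alpha. Dividing each row of their Gram matrix by the p-part of its diagonal entry gives
   a matrix that is diagonal with unit entries mod p, so the Gram matrix is nonsingular and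
   there are at most n such sets. A set of A'_p lies outside A'_q for some other prime q of l
   (otherwise l divides its size), and the sets of A'_p are unions of classes of equal columns
   of M_p, so the same argument over these t classes bounds each A'_p - A'_q by t. Hence
   |F| <= n + (omega - 1) t, and a second bad prime gives omega >= 2, which turns this into
   the stated bound. *)

lemma dvd_det_minus_prod_diag:
  fixes H :: "'a::comm_ring_1 mat"
  assumes H: "H \<in> carrier_mat m m"
    and off: "\<And>i j. i < m \<Longrightarrow> j < m \<Longrightarrow> i \<noteq> j \<Longrightarrow> c dvd H $$ (i, j)"
  shows "c dvd det H - (\<Prod>i = 0..<m. H $$ (i, i))"
proof -
  let ?S = "{\<pi>. \<pi> permutes {0..<m}}"
  let ?f = "\<lambda>\<pi>. signof \<pi> * (\<Prod>i = 0..<m. H $$ (i, \<pi> i))"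
  have id: "id \<in> ?S" by (simp add: permutes_id)
  have "det H = ?f id + sum ?f (?S - {id})"
    unfolding det_def'[OF H] using sum.remove[OF _ id, of ?f] by (simp add: finite_permutations)
  moreover have "c dvd sum ?f (?S - {id})"
  proof (rule dvd_sum)
    fix \<pi> assume "\<pi> \<in> ?S - {id}"
    then have \<pi>: "\<pi> permutes {0..<m}" and "\<pi> \<noteq> id" by auto
    then obtain i where moved: "\<pi> i \<noteq> i" by (metis eq_id_iff)
    with \<pi> have i: "i \<in> {0..<m}" by (meson permutes_not_in)
    with \<pi> have "\<pi> i < m" by (simp add: permutes_in_image)
    with off moved i have "c dvd H $$ (i, \<pi> i)" by auto
    with i show "c dvd ?f \<pi>" by (intro dvd_mult dvd_trans[OF _ dvd_prodI]) auto
  qed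
  ultimately show ?thesis by simp
qed

lemma det_neq_0_if_prime_power_dvd_off_diag:
  fixes G :: "int mat" and p :: int
  assumes G: "G \<in> carrier_mat m m" and p: "prime p"
    and diag: "\<And>i. i < m \<Longrightarrow> \<not> p ^ a dvd G $$ (i, i)"
    and off: "\<And>i j. i < m \<Longrightarrow> j < m \<Longrightarrow> i \<noteq> j \<Longrightarrow> p ^ a dvd G $$ (i, j)"
  shows "det G \<noteq> 0"
proof -
  define v where "v i = multiplicity p (G $$ (i, i))" for i
  define rows where "rows i = vec m (\<lambda>j. G $$ (i, j) div p ^ v i)" for i
  define H where "H = mat\<^sub>r m m rows"
  have H: "H \<in> carrier_mat m m" by (simp add: H_def)
  have unit: "\<not> is_unit p" using p not_prime_unit by blast
  have diag_nonzero: "G $$ (i, i) \<noteq> 0" if "i < m" for i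
    using diag[OF that] by (metis dvd_0_right)
  have v_less: "v i < a" if "i < m" for i
    unfolding v_def using diag_nonzero[OF that] unit diag[OF that] by (rule multiplicity_lessI)
  have off_dvd: "p ^ Suc (v i) dvd G $$ (i, j)" if "i < m" "j < m" "i \<noteq> j" for i j
  proof -
    have "p ^ Suc (v i) dvd p ^ a" using v_less[OF that(1)] by (intro le_imp_power_dvd) simp
    then show ?thesis using off[OF that] by (rule dvd_trans)
  qed
  have row_dvd: "p ^ v i dvd G $$ (i, j)" if "i < m" "j < m" for i j
  proof (cases "i = j")
    case True
    then show ?thesis by (simp add: v_def multiplicity_dvd)
  next
    case False
    have "p ^ v i dvd p ^ Suc (v i)" by (rule le_imp_power_dvd) simp
    then show ?thesis using off_dvd[OF that False] by (rule dvd_trans)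
  qed
  have G_rows: "G = mat\<^sub>r m m (\<lambda>i. p ^ v i \<cdot>\<^sub>v rows i)"
    using G row_dvd by (intro eq_matI) (auto simp: rows_def)
  have "det G = (\<Prod>i = 0..<m. p ^ v i) * det H"
    unfolding H_def by (subst G_rows) (rule det_rows_mul, simp add: rows_def)
  moreover have "p \<noteq> 0" using p by auto
  then have "(\<Prod>i = 0..<m. p ^ v i) \<noteq> 0" by simp
  moreover have "det H \<noteq> 0"
  proof
    have "p dvd H $$ (i, j)" if "i < m" "j < m" "i \<noteq> j" for i j
      using off_dvd[OF that] row_dvd[OF that(1,2)] \<open>p \<noteq> 0\<close> that
      by (simp add: H_def rows_def dvd_div_iff_mult)
    then have "p dvd det H - (\<Prod>i = 0..<m. H $$ (i, i))"
      by (rule dvd_det_minus_prod_diag[OF H])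
    moreover assume "det H = 0"
    ultimately obtain i where "i < m" "p dvd H $$ (i, i)"
      using p by (auto simp: prime_dvd_prod_iff)
    then show False using multiplicity_decompose[OF diag_nonzero unit] by (simp add: H_def rows_def v_def)
  qed
  ultimately show ?thesis by simp
qed

lemma det_mult_eq_0_if_inner_dim_less:
  fixes X Y :: "'a::comm_ring_1 mat"
  assumes X: "X \<in> carrier_mat m k" and Y: "Y \<in> carrier_mat k m" and km: "k < m"
  shows "det (X * Y) = 0"
proof -
  define X' where "X' = mat m m (\<lambda>(i, r). if r < k then X $$ (i, r) else 0)"
  define rows where "rows r = (if r < k then row Y r else 0\<^sub>v m)" for r
  define Y' where "Y' = mat\<^sub>r m m rows"
  have "X * Y = X' * Y'"
  proof (rule eq_matI)
    fix i j assume "i < dim_row (X' * Y')" "j < dim_col (X' * Y')"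
    then have ij: "i < m" "j < m" by (simp_all add: X'_def Y'_def)
    have "(X' * Y') $$ (i, j) = (\<Sum>r = 0..<m. if r < k then X $$ (i, r) * Y $$ (r, j) else 0)"
      using ij Y by (auto simp: X'_def Y'_def rows_def scalar_prod_def intro: sum.cong)
    also have "\<dots> = (\<Sum>r = 0..<k. X $$ (i, r) * Y $$ (r, j))"
      using km by (simp add: sum.If_cases Int_def atLeast0LessThan) (intro sum.cong, auto)
    finally show "(X * Y) $$ (i, j) = (X' * Y') $$ (i, j)"
      using ij X Y by (simp add: scalar_prod_def)
  qed (use X Y in \<open>simp_all add: X'_def Y'_def\<close>)
  moreover have "det Y' = 0"
  proof -
    have "Y' = mat\<^sub>r m m (\<lambda>r. if r = k then 0\<^sub>v m else rows r)"
      unfolding Y'_def by (intro arg_cong[where f = "mat\<^sub>r m m"] ext) (simp add: rows_def)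
    also have "det \<dots> = 0"
      using km Y by (intro det_row_0) (auto simp: rows_def)
    finally show ?thesis .
  qed
  moreover have "X' \<in> carrier_mat m m" "Y' \<in> carrier_mat m m" by (simp_all add: X'_def Y'_def)
  ultimately show ?thesis by (simp add: det_mult)
qed

lemma prime_power_gram_card_le:
  fixes u v :: "'s \<Rightarrow> 'k \<Rightarrow> int" and p :: int
  assumes p: "prime p" and S: "finite S" and K: "finite K"
    and diag: "\<And>s. s \<in> S \<Longrightarrow> \<not> p ^ a dvd (\<Sum>\<kappa>\<in>K. u s \<kappa> * v s \<kappa>)"
    and off: "\<And>s t. s \<in> S \<Longrightarrow> t \<in> S \<Longrightarrow> s \<noteq> t \<Longrightarrow> p ^ a dvd (\<Sum>\<kappa>\<in>K. u s \<kappa> * v t \<kappa>)"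
  shows "card S \<le> card K"
proof (rule ccontr)
  assume "\<not> card S \<le> card K"
  obtain e where e: "bij_betw e {0..<card S} S" using ex_bij_betw_nat_finite[OF S] by blast
  obtain g where g: "bij_betw g {0..<card K} K" using ex_bij_betw_nat_finite[OF K] by blast
  define X where "X = mat (card S) (card K) (\<lambda>(i, r). u (e i) (g r))"
  define Y where "Y = mat (card K) (card S) (\<lambda>(r, j). v (e j) (g r))"
  have entry: "(X * Y) $$ (i, j) = (\<Sum>\<kappa>\<in>K. u (e i) \<kappa> * v (e j) \<kappa>)"
    if "i < card S" "j < card S" for i j
    using that sum.reindex_bij_betw[OF g, of "\<lambda>\<kappa>. u (e i) \<kappa> * v (e j) \<kappa>"]
    by (simp add: X_def Y_def scalar_prod_def)
  have X: "X \<in> carrier_mat (card S) (card K)" by (simp add: X_def)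
  have Y: "Y \<in> carrier_mat (card K) (card S)" by (simp add: Y_def)
  have e_in: "e i \<in> S" if "i < card S" for i
    using bij_betwE[OF e] that by simp
  have e_neq: "e i \<noteq> e j" if "i < card S" "j < card S" "i \<noteq> j" for i j
    by (rule inj_on_contraD[OF bij_betw_imp_inj_on[OF e]]) (use that in simp_all)
  have "det (X * Y) \<noteq> 0"
  proof (rule det_neq_0_if_prime_power_dvd_off_diag[OF _ p])
    show "X * Y \<in> carrier_mat (card S) (card S)" using X Y by (rule mult_carrier_mat)
    show "\<not> p ^ a dvd (X * Y) $$ (i, i)" if "i < card S" for i
      using diag[OF e_in[OF that]] entry[OF that that] by simp
    show "p ^ a dvd (X * Y) $$ (i, j)" if "i < card S" "j < card S" "i \<noteq> j" for i j
      using off[OF e_in[OF that(1)] e_in[OF that(2)] e_neq[OF that]] entry[OF that(1,2)] by simp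
  qed
  moreover have "det (X * Y) = 0"
    using \<open>\<not> card S \<le> card K\<close> by (intro det_mult_eq_0_if_inner_dim_less[OF X Y]) linarith
  ultimately show False by contradiction
qed

lemma prime_power_oddtown_card_le:
  fixes S :: "'a set set" and f :: "'a \<Rightarrow> 'b" and p :: nat
  assumes p: "prime p" and U: "finite U" and sub: "\<And>A. A \<in> S \<Longrightarrow> A \<subseteq> U"
    and card_ndvd: "\<And>A. A \<in> S \<Longrightarrow> \<not> p ^ a dvd card A"
    and inter_dvd: "\<And>A B. A \<in> S \<Longrightarrow> B \<in> S \<Longrightarrow> A \<noteq> B \<Longrightarrow> p ^ a dvd card (A \<inter> B)"
    and saturated: "\<And>A x y. A \<in> S \<Longrightarrow> x \<in> A \<Longrightarrow> y \<in> U \<Longrightarrow> f y = f x \<Longrightarrow> y \<in> A"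
  shows "card S \<le> card (f ` U)"
proof -
  define u where "u A c = int (card {x \<in> A. f x = c})" for A c
  define v where "v B c = (if c \<in> f ` B then 1 else 0 :: int)" for B c
  \<comment> \<open>B is a union of fibres of f, so A meets B exactly in the fibres of f that B meets.\<close>
  have gram: "(\<Sum>c\<in>f ` U. u A c * v B c) = int (card (A \<inter> B))" if "A \<in> S" "B \<in> S" for A B
  proof -
    have "u A c * v B c = int (card {x \<in> A \<inter> B. f x = c})" for c
    proof (cases "c \<in> f ` B")
      case True
      then have "{x \<in> A. f x = c} = {x \<in> A \<inter> B. f x = c}"
        using saturated[OF \<open>B \<in> S\<close>] sub[OF \<open>A \<in> S\<close>] by blast
      with True show ?thesis by (simp add: u_def v_def)
    next
      case False
      then have "{x \<in> A \<inter> B. f x = c} = {}" by auto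
      then have "card {x \<in> A \<inter> B. f x = c} = 0" by (simp only: card.empty)
      with False show ?thesis by (simp add: u_def v_def)
    qed
    moreover have "(\<Sum>c\<in>f ` U. card {x \<in> A \<inter> B. f x = c}) = card (A \<inter> B)"
    proof -
      have "A \<inter> B \<subseteq> U" using sub[OF \<open>A \<in> S\<close>] by blast
      then have "finite (A \<inter> B)" "f ` (A \<inter> B) \<subseteq> f ` U" using U by (auto intro: finite_subset)
      then show ?thesis using sum.group[of "A \<inter> B" "f ` U" f "\<lambda>_. 1 :: nat"] U by simp
    qed
    ultimately show ?thesis by (simp flip: of_nat_sum)
  qed
  show ?thesis
  proof (rule prime_power_gram_card_le[where u = u and v = v and p = "int p" and a = a])
    show "prime (int p)" using p by simp
    show "finite S" by (rule finite_subset[of S "Pow U"]) (use sub U in auto)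
    show "finite (f ` U)" using U by simp
    show "\<not> int p ^ a dvd (\<Sum>c\<in>f ` U. u A c * v A c)" if "A \<in> S" for A
      using that card_ndvd by (simp add: gram flip: of_nat_power)
    show "int p ^ a dvd (\<Sum>c\<in>f ` U. u A c * v B c)" if "A \<in> S" "B \<in> S" "A \<noteq> B" for A B
      using that inter_dvd by (simp add: gram flip: of_nat_power)
  qed
qed

lemma dvd_if_prime_power_factors_dvd:
  fixes l k :: nat
  assumes "l > 0" and "\<And>q. q \<in> prime_factors l \<Longrightarrow> q ^ multiplicity q l dvd k"
  shows "l dvd k"
proof (cases "k = 0")
  case False
  show ?thesis
  proof (rule multiplicity_le_imp_dvd)
    fix q :: nat assume q: "prime q"
    show "multiplicity q l \<le> multiplicity q k"
    proof (cases "q \<in> prime_factors l")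
      case True
      with assms(2) False q show ?thesis by (intro multiplicity_geI) auto
    next
      case False
      with q assms(1) show ?thesis by (simp add: in_prime_factors_iff not_dvd_imp_multiplicity_0)
    qed
  qed (use assms(1) in simp)
qed simp

lemma oddtown_finite: "oddtown l n F \<Longrightarrow> finite F"
  unfolding oddtown_def by (intro finite_subset[of F "Pow {1..n}"]) auto

lemma oddtown_card_le_outside_subfam:
  fixes f :: "nat \<Rightarrow> 'b"
  assumes F: "oddtown l n F" and q: "q \<in> prime_factors l" and G: "G \<subseteq> F - subfam l q F"
    and saturated: "\<And>A x y. A \<in> G \<Longrightarrow> x \<in> A \<Longrightarrow> y \<in> {1..n} \<Longrightarrow> f y = f x \<Longrightarrow> y \<in> A"
  shows "card G \<le> card (f ` {1..n})"
proof (rule prime_power_oddtown_card_le[where a = "multiplicity q l"])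
  show "prime q" using q by auto
  show "A \<subseteq> {1..n}" if "A \<in> G" for A using F G that by (auto simp: oddtown_def)
  show "\<not> q ^ multiplicity q l dvd card A" if "A \<in> G" for A using G that by (auto simp: subfam_def)
  show "q ^ multiplicity q l dvd card (A \<inter> B)" if "A \<in> G" "B \<in> G" "A \<noteq> B" for A B
  proof -
    have "l dvd card (A \<inter> B)" using F G that unfolding oddtown_def by blast
    then show ?thesis by (rule dvd_trans[OF multiplicity_dvd])
  qed
qed (use saturated in auto)

lemma subfam_subset_Union_diff_subfam:
  assumes "l > 0" and F: "oddtown l n F" and p: "p \<in> prime_factors l"
  shows "subfam l p F \<subseteq> (\<Union>q \<in> prime_factors l - {p}. subfam l p F - subfam l q F)"
proof
  fix A assume A: "A \<in> subfam l p F"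
  show "A \<in> (\<Union>q \<in> prime_factors l - {p}. subfam l p F - subfam l q F)"
  proof (rule ccontr)
    assume "A \<notin> (\<Union>q \<in> prime_factors l - {p}. subfam l p F - subfam l q F)"
    with A have "q ^ multiplicity q l dvd card A" if "q \<in> prime_factors l" for q
      using that by (cases "q = p") (auto simp: subfam_def)
    with \<open>l > 0\<close> have "l dvd card A" by (rule dvd_if_prime_power_factors_dvd)
    with A F show False by (auto simp: subfam_def oddtown_def)
  qed
qed

lemma num_distinct_cols_le: "num_distinct_cols n G \<le> n"
  unfolding num_distinct_cols_def by (metis card_atLeastAtMost card_image_le diff_Suc_1 finite_atLeastAtMost)

lemma oddtown_card_le_num_distinct_cols:
  assumes "l > 0" and F: "oddtown l n F" and p: "p \<in> prime_factors l"
  shows "card F \<le> n + (card (prime_factors l) - 1) * num_distinct_cols n (subfam l p F)"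
proof -
  define A' where "A' = subfam l p F"
  define col where "col x = {A \<in> A'. x \<in> A}" for x
  define t where "t = num_distinct_cols n A'"
  have "card (F - A') \<le> card (id ` {1..n})"
    using F p by (intro oddtown_card_le_outside_subfam) (auto simp: A'_def)
  then have outside: "card (F - A') \<le> n" by simp
  have "card (A' - subfam l q F) \<le> card (col ` {1..n})" if "q \<in> prime_factors l" for q
    using F that by (intro oddtown_card_le_outside_subfam)
      (auto simp: A'_def col_def subfam_def dest: equalityD1)
  then have pieces: "card (A' - subfam l q F) \<le> t" if "q \<in> prime_factors l" for q
    using that by (simp add: t_def num_distinct_cols_def col_def)
  have "card A' \<le> card (\<Union>q \<in> prime_factors l - {p}. A' - subfam l q F)"
    using subfam_subset_Union_diff_subfam[OF assms] oddtown_finite[OF F]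
    by (intro card_mono) (auto simp: A'_def subfam_def)
  also have "\<dots> \<le> (\<Sum>q \<in> prime_factors l - {p}. card (A' - subfam l q F))"
    by (rule card_UN_le) simp
  also have "\<dots> \<le> (\<Sum>q \<in> prime_factors l - {p}. t)"
    using pieces by (intro sum_mono) auto
  also have "\<dots> = (card (prime_factors l) - 1) * t"
    using p by simp
  finally have "card A' \<le> (card (prime_factors l) - 1) * t" .
  moreover have "card F \<le> card (F - A') + card A'"
  proof -
    have "(F - A') \<union> A' = F" by (auto simp: A'_def subfam_def)
    then show ?thesis using card_Un_le[of "F - A'" A'] by simp
  qed
  ultimately have "card F \<le> n + (card (prime_factors l) - 1) * t" using outside by linarith
  then show ?thesis by (simp only: A'_def t_def)
qed

lemma powr_two_fifths_plus_powr_one_fifth_le: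
  fixes x :: real
  assumes "1 \<le> x"
  shows "x powr 0.4 + x powr 0.2 \<le> x + 1"
proof -
  define y where "y = x powr 0.2"
  have "1 \<le> y" using assms unfolding y_def by (intro ge_one_powr_ge_zero) auto
  have "x powr 0.4 = y ^ 2" "x = y ^ 5"
    using assms unfolding y_def by (simp_all add: powr_power)
  moreover have "0 \<le> (y - 1) * (y ^ 4 + y ^ 3 + y ^ 2 - 1)"
  proof -
    have "1 \<le> y ^ 2" "0 \<le> y ^ 3" "0 \<le> y ^ 4" using \<open>1 \<le> y\<close> by (simp_all add: one_le_power)
    with \<open>1 \<le> y\<close> have "0 \<le> y - 1" "0 \<le> y ^ 4 + y ^ 3 + y ^ 2 - 1" by linarith+
    then show ?thesis by (rule mult_nonneg_nonneg)
  qed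
  moreover have "(y - 1) * (y ^ 4 + y ^ 3 + y ^ 2 - 1) = y ^ 5 - y ^ 2 - y + 1"
    by (simp add: algebra_simps eval_nat_numeral)
  ultimately show ?thesis unfolding y_def[symmetric] by linarith
qed
lemma card_le_omega_n_minus_powr:
  fixes c n t \<omega> l :: nat
  assumes c: "c \<le> n + (\<omega> - 1) * t" and \<omega>: "2 \<le> \<omega>" and "0 < l" and "t \<le> n"
    and t: "real t < real n powr 0.4"
  shows "real c \<le> real \<omega> * real n - real n powr 0.2 + real \<omega> * real l"
proof -
  have "real c \<le> real (n + (\<omega> - 1) * t)" using c by (simp only: of_nat_le_iff)
  also have "\<dots> = real n + (real \<omega> - 1) * real t" using \<omega> by (simp add: of_nat_diff)
  finally have "real c \<le> real n + (real \<omega> - 1) * real t" .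
  moreover from t have "1 \<le> real n" by (cases "n = 0") auto
  then have "real n powr 0.4 + real n powr 0.2 \<le> real n + 1"
    by (rule powr_two_fifths_plus_powr_one_fifth_le)
  moreover have "0 \<le> (real \<omega> - 2) * (real n - real t)" using \<omega> \<open>t \<le> n\<close> by simp
  moreover have "1 \<le> real \<omega> * real l" using \<omega> \<open>0 < l\<close> by (simp add: Suc_le_eq flip: of_nat_mult)
  ultimately show ?thesis using t by (simp add: algebra_simps)
qed

theorem lemma3p2:
  fixes l n :: nat and F :: "nat set set"
  assumes "l > 0"
    and "oddtown l n F"
  shows "card {p. bad_prime l n F p} \<le> 1 \<or>
         real (card F) \<le> real (card (prime_factors l)) * real n - real n powr 0.2
                           + real (card (prime_factors l)) * real l"
proof (cases "card {p. bad_prime l n F p} \<le> 1")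
  case False
  then have "finite {p. bad_prime l n F p}" by (rule contrapos_np) simp
  with False obtain p q where p: "bad_prime l n F p" and q: "bad_prime l n F q" and "p \<noteq> q"
    by (auto simp: card_le_Suc0_iff_eq)
  have "{p, q} \<subseteq> prime_factors l"
    using p q \<open>l > 0\<close> by (auto simp: bad_prime_def in_prime_factors_iff)
  then have "2 \<le> card (prime_factors l)"
    using \<open>p \<noteq> q\<close> card_mono[of "prime_factors l" "{p, q}"] by simp
  moreover have "card F \<le> n + (card (prime_factors l) - 1) * num_distinct_cols n (subfam l p F)"
    using assms \<open>{p, q} \<subseteq> prime_factors l\<close> by (intro oddtown_card_le_num_distinct_cols) auto
  moreover have "real (num_distinct_cols n (subfam l p F)) < real n powr 0.4"
    using p by (simp add: bad_prime_def)
  ultimately show ?thesis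
    using \<open>l > 0\<close> num_distinct_cols_le by (intro disjI2 card_le_omega_n_minus_powr) auto
qed simp

end
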